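(* Let $y:[0,h]\to\mathbb{R}$ solve $y'=f(y)$, $y(0)=y_0$, with $f$ Lipschitz continuous with constant $L$, and assume $f\circ y\in C^M([0,h])$. Given any previous iterate $\eta^{[p]}$, define the explicit SDC iterate by $\eta_0^{[p+1]}=\eta_0$ and, for $n=1,\dots,N$, $$\eta_n^{[p+1]}=\eta_{n-1}^{[p+1]}+h_n\big[f(\eta_{n-1}^{[p+1]})-f(\eta_{n-1}^{[p]})\big]+h\sum_{m=1}^M w_{n,m}f(\eta_m^{[p]}).$$ Then for each $n=1,\dots,N$, $$|e_n^{[p+1]}|\le e^{NhL}|e_0|+C_1h\|\mathbf e^{[p]}\|+C_2h^{M+1},$$ where $C_1,C_2$ are constants depending only on $f$, the exact solution $y$, and the selection of quadrature points.
   Context: Quadrature nodes $0\le\xi_1<\dots<\xi_M\le1$ partition $[0,1]$ into $N$ subintervals, where $N=M-1$ if both endpoints $0,1$ are nodes, $N=M$ if exactly one is, and $N=M+1$ if neither is. The right endpoints are $\xi^R_0=0$, $\xi^R_N=1$, and for the interior ones $\xi^R_n=\xi_{n+1}$ if the left endpoint $0$ is a node, $\xi^R_n=\xi_n$ otherwise. $\ell_m$ is the Lagrange basis polynomial of degree $\le M-1$ with $\ell_m(\xi_k)=\delta_{mk}$, and $w_{n,m}=\int_{\xi^R_{n-1}}^{\xi^R_n}\ell_m(x)\,dx$. For step size $h>0$, $t_n=\xi^R_nh$, $h_n=(\xi^R_n-\xi^R_{n-1})h$. The iterate $\eta^{[p]}$ consists of approximations $\eta^{[p]}_n\approx y(t_n)$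 and values $\eta^{[p]}_m\approx y(\xi_mh)$ at the quadrature nodes used in the quadrature sum. $\eta_0$ approximates $y_0$, $e_0=\eta_0-y_0$, $e^{[p+1]}_n=\eta^{[p+1]}_n-y(t_n)$, $\mathbf e^{[p]}=(\eta^{[p]}_m-y(\xi_mh))_{m=1}^M$, $\|\mathbf e\|=\max_m|e_m|$. *)

theory Defs
  imports "HOL-Analysis.Analysis"
begin

text \<open>Quadrature nodes are given as xi :: nat => real, indexed 1..M.\<close>

definition num_sub :: "(nat \<Rightarrow> real) \<Rightarrow> nat \<Rightarrow> nat" where
  "num_sub xi M =
     (if xi 1 = 0 \<and> xi M = 1 then M - 1
      else if xi 1 = 0 \<or> xi M = 1 then M else M + 1)"

definition xiR :: "(nat \<Rightarrow> real) \<Rightarrow> nat \<Rightarrow> nat \<Rightarrow> real" where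
  "xiR xi M n =
     (if n = 0 then 0
      else if n = num_sub xi M then 1
      else if xi 1 = 0 then xi (n + 1) else xi n)"

text \<open>Index of the quadrature node equal to the interior right endpoint xiR n.\<close>
definition xiR_idx :: "(nat \<Rightarrow> real) \<Rightarrow> nat \<Rightarrow> nat" where
  "xiR_idx xi n = (if xi 1 = 0 then n + 1 else n)"

definition lagrange_basis :: "(nat \<Rightarrow> real) \<Rightarrow> nat \<Rightarrow> nat \<Rightarrow> real \<Rightarrow> real" where
  "lagrange_basis xi M m x = (\<Prod>k\<in>{1..M} - {m}. (x - xi k) / (xi m - xi k))"

definition quad_w :: "(nat \<Rightarrow> real) \<Rightarrow> nat \<Rightarrow> nat \<Rightarrow> nat \<Rightarrow> real" where
  "quad_w xi M n m = integral {xiR xi M (n - 1) .. xiR xi M n} (lagrange_basis xi M m)"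

definition prev_grid :: "(nat \<Rightarrow> real) \<Rightarrow> real \<Rightarrow> (nat \<Rightarrow> real) \<Rightarrow> nat \<Rightarrow> real" where
  "prev_grid xi eta0 P n = (if n = 0 then eta0 else P (xiR_idx xi n))"

text \<open>Explicit SDC sweep: P m is the previous iterate at node xi m * h (m = 1..M).\<close>
fun sdc :: "(real \<Rightarrow> real) \<Rightarrow> (nat \<Rightarrow> real) \<Rightarrow> nat \<Rightarrow> real \<Rightarrow> real \<Rightarrow> (nat \<Rightarrow> real) \<Rightarrow> nat \<Rightarrow> real" where
  "sdc f xi M h eta0 P 0 = eta0"
| "sdc f xi M h eta0 P (Suc n) =
     sdc f xi M h eta0 P n
     + (xiR xi M (Suc n) - xiR xi M n) * h * (f (sdc f xi M h eta0 P n) - f (prev_grid xi eta0 P n))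
     + h * (\<Sum>m = 1..M. quad_w xi M (Suc n) m * f (P m))"

definition C_k_on :: "nat \<Rightarrow> real set \<Rightarrow> (real \<Rightarrow> real) \<Rightarrow> bool" where
  "C_k_on k S g \<longleftrightarrow> (\<exists>D :: nat \<Rightarrow> real \<Rightarrow> real.
      (\<forall>t\<in>S. D 0 t = g t) \<and>
      (\<forall>j<k. \<forall>t\<in>S. (D j has_real_derivative D (Suc j) t) (at t within S)) \<and>
      continuous_on S (D k))"

end

theory Submission
  imports Defs "HOL-Computational_Algebra.Polynomial"
begin

text \<open>The exact solution satisfies the SDC recursion up to the local truncation error of the
  node quadrature. This error is O(h^(M+1)): the Lagrange interpolant reproduces the Taylor
  polynomial of degree M - 1 of f o y exactly, so the interpolation error is the Taylor remainder
  O(h^M) times the Lebesgue constant. Subtracting the two recursions and using the Lipschitz bound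
  gives |e_n| <= (1 + h_n L) |e_(n-1)| + h L (1 + W) ||e^[p]|| + C h^(M+1), with W the total
  absolute quadrature weight, and a discrete Gronwall argument with prod (1 + h_n L) <= exp (N h L)
  finishes the proof.\<close>

lemma C_k_on_taylor_bound:
  fixes g :: "real \<Rightarrow> real"
  assumes "C_k_on M {0..H} g" and M: "M \<ge> 1"
  obtains c K where "K \<ge> 0" and "\<And>s. s \<in> {0..H} \<Longrightarrow> \<bar>g s - (\<Sum>i<M. c i * s ^ i)\<bar> \<le> K * s ^ M"
proof -
  obtain D where D0: "\<forall>t\<in>{0..H}. D 0 t = g t"
    and DD: "\<forall>j<M. \<forall>t\<in>{0..H}. (D j has_real_derivative D (Suc j) t) (at t within {0..H})"
    and DC: "continuous_on {0..H} (D M)"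
    using assms(1) unfolding C_k_on_def by blast
  obtain K where K: "K \<ge> 0" and KD: "\<And>t. t \<in> {0..H} \<Longrightarrow> \<bar>D M t\<bar> \<le> K"
  proof -
    have "bounded (D M ` {0..H})"
      by (intro compact_imp_bounded compact_continuous_image DC) simp
    then obtain K0 where "\<forall>x\<in>D M ` {0..H}. norm x \<le> K0" using bounded_iff by metis
    then show thesis by (intro that[of "max K0 0"]) force+
  qed
  have "\<bar>g s - (\<Sum>i<M. D i 0 / fact i * s ^ i)\<bar> \<le> K * s ^ M" if s: "s \<in> {0..H}" for s
  proof -
    have sub: "{0..s} \<subseteq> {0..H}" using s by auto
    define R where "R x = ((s - x) ^ (M - 1) / fact (M - 1)) *\<^sub>R D M x" for x
    have taylor: "D 0 s = (\<Sum>i<M. ((s - 0) ^ i / fact i) *\<^sub>R D i 0) + integral {0..s} R"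
      unfolding R_def
    proof (rule Taylor_integral)
      fix m t assume "m < M" "0 \<le> t" "t \<le> s"
      then have "(D m has_real_derivative D (Suc m) t) (at t within {0..s})"
        using DD sub by (intro DERIV_subset[OF _ sub]) auto
      then show "(D m has_vector_derivative D (Suc m) t) (at t within {0..s})"
        by (simp add: has_real_derivative_iff_has_vector_derivative)
    qed (use M s in auto)
    have "norm (integral {0..s} R) \<le> s ^ (M - 1) * K * (s - 0)"
    proof (rule integral_bound)
      show "continuous_on {0..s} R"
        unfolding R_def by (intro continuous_intros continuous_on_subset[OF DC sub]) auto
    next
      fix t assume t: "t \<in> {0..s}"
      have "(s - t) ^ (M - 1) / fact (M - 1) \<le> (s - t) ^ (M - 1)"
        using frac_le[of "(s - t) ^ (M - 1)" "(s - t) ^ (M - 1)" 1 "fact (M - 1)"] t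
        by (simp add: fact_ge_1)
      also have "\<dots> \<le> s ^ (M - 1)" using t by (intro power_mono) auto
      finally have "\<bar>(s - t) ^ (M - 1) / fact (M - 1)\<bar> * \<bar>D M t\<bar> \<le> s ^ (M - 1) * K"
        using t KD sub by (intro mult_mono) auto
      then show "norm (R t) \<le> s ^ (M - 1) * K" unfolding R_def by (simp add: abs_mult)
    qed (use s in auto)
    also have "s ^ (M - 1) * K * (s - 0) = K * s ^ M" using M by (cases M) auto
    finally have "\<bar>integral {0..s} R\<bar> \<le> K * s ^ M" by simp
    moreover have "g s = D 0 s" using D0 s by simp
    ultimately show ?thesis using taylor by (simp add: mult.commute)
  qed
  then show thesis by (intro that[of K "\<lambda>i. D i 0 / fact i"] K)
qed

lemma continuous_on_lagrange_basis: "continuous_on S (lagrange_basis xi M m)"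
  unfolding lagrange_basis_def divide_inverse by (intro continuous_intros)

lemma lagrange_basis_node:
  assumes inj: "inj_on xi {1..M}" and m: "m \<in> {1..M}" and k: "k \<in> {1..M}"
  shows "lagrange_basis xi M m (xi k) = (if m = k then 1 else 0)"
proof (cases "m = k")
  case True
  have "xi m \<noteq> xi j" if "j \<in> {1..M} - {m}" for j
    using inj m that by (metis DiffE inj_on_contraD singletonI)
  then show ?thesis using True unfolding lagrange_basis_def by (simp add: prod.neutral)
next
  case False
  have "lagrange_basis xi M m (xi k) = 0"
    unfolding lagrange_basis_def using False m k by (intro prod_zero) auto
  then show ?thesis using False by simp
qed

lemma lagrange_interpolation_poly:
  fixes p :: "real poly"
  assumes inj: "inj_on xi {1..M}" and deg: "degree p < M"
  shows "(\<Sum>m=1..M. poly p (xi m) * lagrange_basis xi M m x) = poly p x"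
proof -
  define Lp where "Lp m = (\<Prod>k\<in>{1..M}-{m}. smult (1 / (xi m - xi k)) [:-xi k, 1:])" for m
  have poly_Lp: "poly (Lp m) z = lagrange_basis xi M m z" for m z
    unfolding Lp_def lagrange_basis_def poly_prod
    by (intro prod.cong) (auto simp: diff_divide_distrib)
  have degree_Lp: "degree (Lp m) \<le> M - 1" if "m \<in> {1..M}" for m
  proof -
    have "degree (Lp m) \<le> sum (degree \<circ> (\<lambda>k. smult (1 / (xi m - xi k)) [:-xi k, 1:])) ({1..M}-{m})"
      unfolding Lp_def by (rule degree_prod_sum_le) auto
    also have "\<dots> \<le> (\<Sum>k\<in>{1..M}-{m}. 1)"
      by (intro sum_mono) (auto simp: degree_smult_le)
    finally show ?thesis using that by simp
  qed
  define q where "q = (\<Sum>m\<in>{1..M}. smult (poly p (xi m)) (Lp m))"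
  have poly_q: "poly q z = (\<Sum>m=1..M. poly p (xi m) * lagrange_basis xi M m z)" for z
    unfolding q_def poly_sum by (simp add: poly_Lp)
  have "degree q \<le> M - 1"
    unfolding q_def using degree_Lp
    by (intro degree_sum_le) (auto intro: order.trans[OF degree_smult_le])
  have card: "card (xi ` {1..M}) = M" using inj by (simp add: card_image)
  have "q = p"
  proof (rule poly_eqI_degree[where A = "xi ` {1..M}"])
    fix z assume "z \<in> xi ` {1..M}"
    then obtain k where k: "k \<in> {1..M}" "z = xi k" by auto
    have "poly q z = (\<Sum>m\<in>{1..M}. if m = k then poly p (xi m) else 0)"
      unfolding poly_q k(2) using k(1) by (intro sum.cong) (auto simp: lagrange_basis_node[OF inj])
    then show "poly q z = poly p z" using k by simp
  next
    show "degree p < card (xi ` {1..M})" using deg card by linarith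
  next
    show "degree q < card (xi ` {1..M})" using \<open>degree q \<le> M - 1\<close> deg card by linarith
  qed
  then show ?thesis using poly_q[of x] by (simp only:)
qed

lemma lagrange_lebesgue_bound:
  assumes "compact S"
  obtains B where "B \<ge> 0" and "\<And>x. x \<in> S \<Longrightarrow> (\<Sum>m=1..M. \<bar>lagrange_basis xi M m x\<bar>) \<le> B"
proof -
  have "bounded ((\<lambda>x. \<Sum>m=1..M. \<bar>lagrange_basis xi M m x\<bar>) ` S)"
    by (intro compact_imp_bounded compact_continuous_image continuous_intros
        continuous_on_lagrange_basis assms)
  then obtain B where "\<forall>z\<in>(\<lambda>x. \<Sum>m=1..M. \<bar>lagrange_basis xi M m x\<bar>) ` S. norm z \<le> B"
    using bounded_iff by metis
  then show thesis by (intro that[of "max B 0"]) force+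
qed

lemma lagrange_interpolation_error:
  fixes g :: "real \<Rightarrow> real"
  assumes inj: "inj_on xi {1..M}" and M: "M \<ge> 1"
    and nodes: "\<And>m. m \<in> {1..M} \<Longrightarrow> xi m \<in> {0..1}"
    and approx: "\<And>s. s \<in> {0..h} \<Longrightarrow> \<bar>g s - (\<Sum>i<M. c i * s ^ i)\<bar> \<le> \<epsilon>"
    and lebesgue: "(\<Sum>m=1..M. \<bar>lagrange_basis xi M m x\<bar>) \<le> B"
    and x: "x \<in> {0..1}" and h: "0 \<le> h"
  shows "\<bar>g (x * h) - (\<Sum>m=1..M. lagrange_basis xi M m x * g (xi m * h))\<bar> \<le> (1 + B) * \<epsilon>"
proof -
  define T where "T s = (\<Sum>i<M. c i * s ^ i)" for s
  have scaled: "z * h \<in> {0..h}" if "z \<in> {0..1}" for z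
    using that h mult_left_le_one_le[of h z] by (auto simp: mult.commute)
  define p where "p = (\<Sum>i<M. monom (c i * h ^ i) i)"
  have poly_p: "poly p z = T (z * h)" for z
    unfolding p_def T_def poly_sum poly_monom by (simp add: power_mult_distrib mult_ac)
  have "degree p \<le> M - 1"
    unfolding p_def by (intro degree_sum_le) (auto intro: order.trans[OF degree_monom_le])
  then have "(\<Sum>m=1..M. T (xi m * h) * lagrange_basis xi M m x) = T (x * h)"
    using lagrange_interpolation_poly[OF inj, of p x] M by (simp add: poly_p)
  then have "g (x * h) - (\<Sum>m=1..M. lagrange_basis xi M m x * g (xi m * h))
      = (g (x * h) - T (x * h)) - (\<Sum>m=1..M. lagrange_basis xi M m x * (g (xi m * h) - T (xi m * h)))"
    by (simp add: algebra_simps sum_subtractf)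
  moreover have "\<bar>\<Sum>m=1..M. lagrange_basis xi M m x * (g (xi m * h) - T (xi m * h))\<bar> \<le> B * \<epsilon>"
  proof -
    have "\<bar>\<Sum>m=1..M. lagrange_basis xi M m x * (g (xi m * h) - T (xi m * h))\<bar>
        \<le> (\<Sum>m=1..M. \<bar>lagrange_basis xi M m x\<bar> * \<epsilon>)"
      unfolding abs_mult T_def
      by (rule order.trans[OF sum_abs], intro sum_mono)
        (auto simp: abs_mult intro!: mult_left_mono approx scaled nodes)
    also have "\<dots> \<le> B * \<epsilon>"
      using lebesgue approx[of 0] h by (auto simp: sum_distrib_right[symmetric] intro: mult_right_mono)
    finally show ?thesis .
  qed
  moreover have "\<bar>g (x * h) - T (x * h)\<bar> \<le> \<epsilon>" unfolding T_def by (intro approx scaled x)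
  ultimately show ?thesis by (simp add: algebra_simps)
qed

lemma quadrature_error:
  fixes g y :: "real \<Rightarrow> real"
  assumes deriv: "\<And>t. t \<in> {0..h} \<Longrightarrow> (y has_real_derivative g t) (at t within {0..h})"
    and interp: "\<And>x. x \<in> {0..1} \<Longrightarrow> \<bar>g (x * h) - (\<Sum>m=1..M. lagrange_basis xi M m x * g (xi m * h))\<bar> \<le> \<delta>"
    and ab: "0 \<le> a" "a \<le> b" "b \<le> 1" and h: "0 < h"
  shows "\<bar>y (b * h) - y (a * h) - h * (\<Sum>m=1..M. integral {a..b} (lagrange_basis xi M m) * g (xi m * h))\<bar>
           \<le> h * \<delta>"
proof -
  have "((\<lambda>x. g (x * h) * h) has_integral y (b * h) - y (a * h)) {a..b}"
  proof (rule fundamental_theorem_of_calculus[OF ab(2)])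
    fix x assume x: "x \<in> {a..b}"
    have img: "(\<lambda>x. x * h) ` {a..b} \<subseteq> {0..h}"
      using ab h by (auto intro: mult_left_le_one_le simp: mult.commute)
    moreover have "x * h \<in> {0..h}" using img x by blast
    ultimately have "(y has_real_derivative g (x * h)) (at (x * h) within (\<lambda>x. x * h) ` {a..b})"
      using deriv by (intro DERIV_subset[OF _ img]) auto
    moreover have "((\<lambda>x. x * h) has_real_derivative h) (at x within {a..b})"
      by (auto intro!: derivative_eq_intros)
    ultimately have "((\<lambda>x. y (x * h)) has_real_derivative g (x * h) * h) (at x within {a..b})"
      using DERIV_image_chain by (simp add: o_def)
    then show "((\<lambda>x. y (x * h)) has_vector_derivative g (x * h) * h) (at x within {a..b})"
      by (simp add: has_real_derivative_iff_has_vector_derivative)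
  qed
  moreover have "((\<lambda>x. (\<Sum>m=1..M. lagrange_basis xi M m x * g (xi m * h)) * h) has_integral
      (\<Sum>m=1..M. integral {a..b} (lagrange_basis xi M m) * g (xi m * h)) * h) {a..b}"
    by (intro has_integral_mult_left has_integral_sum integrable_integral
        integrable_continuous_real continuous_on_lagrange_basis) auto
  ultimately have "((\<lambda>x. (g (x * h) - (\<Sum>m=1..M. lagrange_basis xi M m x * g (xi m * h))) * h)
      has_integral y (b * h) - y (a * h) - h * (\<Sum>m=1..M. integral {a..b} (lagrange_basis xi M m) * g (xi m * h)))
      {a..b}"
    by (auto dest: has_integral_diff simp: algebra_simps)
  then have "norm (y (b * h) - y (a * h) - h * (\<Sum>m=1..M. integral {a..b} (lagrange_basis xi M m) * g (xi m * h)))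
      \<le> h * \<delta> * Henstock_Kurzweil_Integration.content (cbox a b)"
    using interp ab h interp[of 0]
    by (intro has_integral_bound[where f = "\<lambda>x. (g (x * h) - (\<Sum>m=1..M. lagrange_basis xi M m x * g (xi m * h))) * h"])
      (auto simp: abs_mult mult.commute intro: mult_left_mono)
  also have "\<dots> \<le> h * \<delta>"
    using ab h interp[of 0] by (intro mult_left_le) auto
  finally show ?thesis by simp
qed

lemma discrete_gronwall:
  fixes u d :: "nat \<Rightarrow> real"
  assumes step: "\<And>k. k < n \<Longrightarrow> u (Suc k) \<le> (1 + d k) * u k + \<beta>"
    and d: "\<And>k. k < n \<Longrightarrow> 0 \<le> d k \<and> 1 + d k \<le> G"
    and u0: "0 \<le> u 0" and \<beta>: "0 \<le> \<beta>"
  shows "u n \<le> exp (\<Sum>k<n. d k) * u 0 + real n * G ^ n * \<beta>"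
  using step d
proof (induction n)
  case 0
  then show ?case by simp
next
  case (Suc n)
  have d_n: "0 \<le> d n" "1 + d n \<le> G" and G: "1 \<le> G" using Suc.prems(2)[of n] by auto
  define A where "A = exp (\<Sum>k<n. d k) * u 0"
  define R where "R = real n * G ^ n * \<beta>"
  have "u (Suc n) \<le> (1 + d n) * (A + R) + \<beta>"
    using Suc d_n unfolding A_def R_def
    by (intro order.trans[OF Suc.prems(1)] add_right_mono mult_left_mono) auto
  also have "\<dots> = (1 + d n) * A + (1 + d n) * R + \<beta>" by (simp add: distrib_left)
  also have "\<dots> \<le> exp (d n) * A + G * R + G ^ Suc n * \<beta>"
  proof (intro add_mono mult_right_mono)
    show "\<beta> \<le> G ^ Suc n * \<beta>"
      using \<beta> mult_right_mono[OF one_le_power[OF G, of "Suc n"], of \<beta>] by simp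
  qed (use d_n G u0 \<beta> in \<open>auto simp: A_def R_def\<close>)
  finally show ?case by (simp add: A_def R_def exp_add algebra_simps)
qed

locale sdc_problem =
  fixes f :: "real \<Rightarrow> real" and L H :: real and y :: "real \<Rightarrow> real"
    and xi :: "nat \<Rightarrow> real" and M :: nat
  assumes lip: "L-lipschitz_on UNIV f"
    and H: "H > 0"
    and ode: "\<And>t. t \<in> {0..H} \<Longrightarrow> (y has_real_derivative f (y t)) (at t within {0..H})"
    and smooth: "C_k_on M {0..H} (\<lambda>t. f (y t))"
    and M: "M \<ge> 1"
    and nodes_mono: "\<And>i j. 1 \<le> i \<Longrightarrow> i < j \<Longrightarrow> j \<le> M \<Longrightarrow> xi i < xi j"
    and nodes_lo: "0 \<le> xi 1" and nodes_hi: "xi M \<le> 1"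
begin

abbreviation N :: nat where "N \<equiv> num_sub xi M"

definition err :: "real \<Rightarrow> real \<Rightarrow> (nat \<Rightarrow> real) \<Rightarrow> nat \<Rightarrow> real" where
  "err h eta0 P n = sdc f xi M h eta0 P n - y (xiR xi M n * h)"

definition node_err :: "real \<Rightarrow> (nat \<Rightarrow> real) \<Rightarrow> real" where
  "node_err h P = (MAX m\<in>{1..M}. \<bar>P m - y (xi m * h)\<bar>)"

definition truncation_err :: "real \<Rightarrow> real \<Rightarrow> real \<Rightarrow> real" where
  "truncation_err h a b =
     y (b * h) - y (a * h) - h * (\<Sum>m=1..M. integral {a..b} (lagrange_basis xi M m) * f (y (xi m * h)))"

definition weight_sum :: real where
  "weight_sum = (\<Sum>n=1..N. \<Sum>m=1..M. \<bar>quad_w xi M n m\<bar>)"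

lemma L_nonneg: "0 \<le> L"
  using lip by (simp add: lipschitz_on_def)

lemma f_lipschitz: "\<bar>f u - f v\<bar> \<le> L * \<bar>u - v\<bar>"
  using lip by (simp add: lipschitz_on_def dist_real_def)

lemma nodes_le: "1 \<le> i \<Longrightarrow> i \<le> j \<Longrightarrow> j \<le> M \<Longrightarrow> xi i \<le> xi j"
  using nodes_mono[of i j] by (cases "i = j") auto

lemma nodes_inj: "inj_on xi {1..M}"
  by (rule inj_onI) (metis atLeastAtMost_iff linorder_neqE_nat nodes_mono order.irrefl)

lemma nodes_unit: "m \<in> {1..M} \<Longrightarrow> xi m \<in> {0..1}"
  using nodes_le[of 1 m] nodes_le[of m M] nodes_lo nodes_hi by auto

lemma xiR_interior:
  assumes "1 \<le> k" "k < N"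
  shows "xiR_idx xi k \<in> {1..M}" and "xiR xi M k = xi (xiR_idx xi k)"
  using assms unfolding xiR_def xiR_idx_def num_sub_def by (auto split: if_splits)

lemma xiR_unit:
  assumes "k \<le> N"
  shows "0 \<le> xiR xi M k" and "xiR xi M k \<le> 1"
proof -
  have "xiR xi M k \<in> {0..1}"
  proof (cases "k = 0 \<or> k = N")
    case False
    then show ?thesis using assms xiR_interior[of k] nodes_unit by auto
  qed (auto simp: xiR_def)
  then show "0 \<le> xiR xi M k" "xiR xi M k \<le> 1" by auto
qed

lemma xiR_step:
  assumes k: "k < N"
  shows "xiR xi M k \<le> xiR xi M (Suc k)"
proof (cases "k = 0 \<or> Suc k = N")
  case True
  then show ?thesis using xiR_unit[of k] xiR_unit[of "Suc k"] k by (auto simp: xiR_def)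
next
  case False
  then have "xiR_idx xi (Suc k) = Suc (xiR_idx xi k)" by (simp add: xiR_idx_def)
  then show ?thesis
    using False k xiR_interior[of k] xiR_interior[of "Suc k"] nodes_le by auto
qed

lemma node_err_ge: "m \<in> {1..M} \<Longrightarrow> \<bar>P m - y (xi m * h)\<bar> \<le> node_err h P"
  unfolding node_err_def by (intro Max_ge) auto

lemma node_err_nonneg: "0 \<le> node_err h P"
  using node_err_ge[of 1] M by (force intro: order.trans[OF abs_ge_zero])

lemma weight_sum_nonneg: "0 \<le> weight_sum"
  unfolding weight_sum_def by (intro sum_nonneg) auto

lemma quad_w_abs_sum_le: "n \<in> {1..N} \<Longrightarrow> (\<Sum>m=1..M. \<bar>quad_w xi M n m\<bar>) \<le> weight_sum"
  unfolding weight_sum_def by (intro member_le_sum sum_nonneg) auto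

lemma truncation_err_bound:
  obtains C where "0 \<le> C"
    and "\<And>h a b. 0 < h \<Longrightarrow> h \<le> H \<Longrightarrow> 0 \<le> a \<Longrightarrow> a \<le> b \<Longrightarrow> b \<le> 1 \<Longrightarrow>
           \<bar>truncation_err h a b\<bar> \<le> C * h ^ (M + 1)"
proof -
  obtain c K where K: "0 \<le> K"
    and taylor: "\<And>s. s \<in> {0..H} \<Longrightarrow> \<bar>f (y s) - (\<Sum>i<M. c i * s ^ i)\<bar> \<le> K * s ^ M"
    using C_k_on_taylor_bound[OF smooth M] by blast
  obtain B where B: "0 \<le> B"
    and lebesgue: "\<And>x. x \<in> {0..1} \<Longrightarrow> (\<Sum>m=1..M. \<bar>lagrange_basis xi M m x\<bar>) \<le> B"
    using lagrange_lebesgue_bound[of "{0..1}"] by auto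
  have "\<bar>truncation_err h a b\<bar> \<le> K * (1 + B) * h ^ (M + 1)"
    if h: "0 < h" "h \<le> H" and ab: "0 \<le> a" "a \<le> b" "b \<le> 1" for h a b
  proof -
    have "\<bar>truncation_err h a b\<bar> \<le> h * ((1 + B) * (K * h ^ M))"
      unfolding truncation_err_def
    proof (rule quadrature_error[OF _ _ ab h(1)])
      show "(y has_real_derivative f (y t)) (at t within {0..h})" if "t \<in> {0..h}" for t
        using that h by (intro DERIV_subset[OF ode]) auto
      show "\<bar>f (y (x * h)) - (\<Sum>m=1..M. lagrange_basis xi M m x * f (y (xi m * h)))\<bar>
          \<le> (1 + B) * (K * h ^ M)" if "x \<in> {0..1}" for x
      proof (rule lagrange_interpolation_error[OF nodes_inj M nodes_unit _ lebesgue[OF that] that])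
        show "\<bar>f (y s) - (\<Sum>i<M. c i * s ^ i)\<bar> \<le> K * h ^ M" if "s \<in> {0..h}" for s
          using taylor[of s] that h K by (auto intro: order.trans mult_left_mono power_mono)
      qed (use h in auto)
    qed
    then show ?thesis by (simp add: algebra_simps)
  qed
  then show thesis using K B by (intro that[of "K * (1 + B)"]) auto
qed

lemma prev_grid_defect:
  assumes k: "k < N"
  shows "\<bar>f (sdc f xi M h eta0 P k) - f (prev_grid xi eta0 P k)\<bar>
           \<le> L * \<bar>err h eta0 P k\<bar> + L * node_err h P"
proof (cases "k = 0")
  case True
  \<comment> \<open>both arguments are eta0, so the initial error does not enter this defect\<close>
  then show ?thesis using L_nonneg node_err_nonneg by (simp add: prev_grid_def)
next
  case False
  define S where "S = sdc f xi M h eta0 P k"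
  define Y where "Y = y (xiR xi M k * h)"
  have "\<bar>Y - prev_grid xi eta0 P k\<bar> \<le> node_err h P"
    using False k xiR_interior[of k] node_err_ge[of "xiR_idx xi k" P h]
    by (simp add: Y_def prev_grid_def abs_minus_commute)
  then have "\<bar>f Y - f (prev_grid xi eta0 P k)\<bar> \<le> L * node_err h P"
    using f_lipschitz L_nonneg by (meson mult_left_mono order.trans)
  moreover have "\<bar>f S - f Y\<bar> \<le> L * \<bar>err h eta0 P k\<bar>"
    using f_lipschitz by (simp add: S_def Y_def err_def)
  ultimately show ?thesis unfolding S_def[symmetric] by linarith
qed

lemma sdc_err_step:
  assumes k: "k < N" and h: "0 < h"
  shows "\<bar>err h eta0 P (Suc k)\<bar>
           \<le> (1 + (xiR xi M (Suc k) - xiR xi M k) * h * L) * \<bar>err h eta0 P k\<bar>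
             + h * L * (1 + weight_sum) * node_err h P
             + \<bar>truncation_err h (xiR xi M k) (xiR xi M (Suc k))\<bar>"
proof -
  define a b where "a = xiR xi M k" and "b = xiR xi M (Suc k)"
  define S Pk where "S = sdc f xi M h eta0 P k" and "Pk = prev_grid xi eta0 P k"
  define w where "w m = quad_w xi M (Suc k) m" for m
  define E where "E = node_err h P"
  have ab: "0 \<le> b - a" "b - a \<le> 1"
    using xiR_step[OF k] xiR_unit[of k] xiR_unit[of "Suc k"] k by (auto simp: a_def b_def)
  have E: "0 \<le> E" by (simp add: E_def node_err_nonneg)
  have "err h eta0 P (Suc k) = err h eta0 P k + (b - a) * h * (f S - f Pk)
      + h * (\<Sum>m=1..M. w m * (f (P m) - f (y (xi m * h)))) - truncation_err h a b"
    by (simp add: err_def truncation_err_def a_def b_def S_def Pk_def w_def quad_w_def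
        sum_subtractf algebra_simps)
  moreover have "\<bar>(b - a) * h * (f S - f Pk)\<bar> \<le> (b - a) * h * L * \<bar>err h eta0 P k\<bar> + h * L * E"
  proof -
    have "\<bar>(b - a) * h * (f S - f Pk)\<bar> \<le> (b - a) * h * (L * \<bar>err h eta0 P k\<bar> + L * E)"
      using prev_grid_defect[OF k] ab h
      by (auto simp: abs_mult S_def Pk_def E_def intro!: mult_left_mono)
    also have "\<dots> \<le> (b - a) * h * L * \<bar>err h eta0 P k\<bar> + h * L * E"
      using ab h L_nonneg E mult_left_le_one_le[of "h * L * E" "b - a"]
      by (simp add: algebra_simps)
    finally show ?thesis .
  qed
  moreover have "\<bar>h * (\<Sum>m=1..M. w m * (f (P m) - f (y (xi m * h))))\<bar> \<le> h * L * weight_sum * E"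
  proof -
    have "\<bar>\<Sum>m=1..M. w m * (f (P m) - f (y (xi m * h)))\<bar> \<le> (\<Sum>m=1..M. \<bar>w m\<bar> * (L * E))"
      using f_lipschitz node_err_ge L_nonneg unfolding E_def
      by (intro order.trans[OF sum_abs] sum_mono)
        (auto simp: abs_mult intro!: mult_left_mono order.trans[OF f_lipschitz])
    also have "\<dots> \<le> weight_sum * (L * E)"
      using quad_w_abs_sum_le[of "Suc k"] k L_nonneg E
      by (auto simp: w_def sum_distrib_right[symmetric] intro: mult_right_mono)
    finally show ?thesis using h by (simp add: abs_mult mult_left_mono algebra_simps)
  qed
  ultimately have "\<bar>err h eta0 P (Suc k)\<bar> \<le> \<bar>err h eta0 P k\<bar> + ((b - a) * h * L * \<bar>err h eta0 P k\<bar> + h * L * E)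
      + h * L * weight_sum * E + \<bar>truncation_err h a b\<bar>"
    by arith
  also have "\<dots> = (1 + (b - a) * h * L) * \<bar>err h eta0 P k\<bar> + h * L * (1 + weight_sum) * E
      + \<bar>truncation_err h a b\<bar>"
    by (simp add: algebra_simps)
  finally show ?thesis by (simp only: a_def b_def E_def)
qed

lemma sdc_err_bound:
  assumes h: "0 < h" "h \<le> H" and n: "n \<le> N"
    and trunc: "\<And>a b. 0 \<le> a \<Longrightarrow> a \<le> b \<Longrightarrow> b \<le> 1 \<Longrightarrow> \<bar>truncation_err h a b\<bar> \<le> C * h ^ (M + 1)"
    and C: "0 \<le> C"
  shows "\<bar>err h eta0 P n\<bar> \<le> exp (real N * h * L) * \<bar>eta0 - y 0\<bar>
           + real N * exp (L * H) ^ N * (h * L * (1 + weight_sum) * node_err h P + C * h ^ (M + 1))"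
proof -
  define d where "d k = (xiR xi M (Suc k) - xiR xi M k) * h * L" for k
  define \<beta> where "\<beta> = h * L * (1 + weight_sum) * node_err h P + C * h ^ (M + 1)"
  have \<beta>: "0 \<le> \<beta>"
    unfolding \<beta>_def using h L_nonneg C node_err_nonneg weight_sum_nonneg
    by (intro add_nonneg_nonneg mult_nonneg_nonneg) auto
  have "\<bar>err h eta0 P n\<bar> \<le> exp (\<Sum>k<n. d k) * \<bar>err h eta0 P 0\<bar> + real n * exp (L * H) ^ n * \<beta>"
  proof (rule discrete_gronwall[OF _ _ abs_ge_zero \<beta>])
    fix k assume "k < n"
    then have k: "k < N" using n by simp
    have \<Delta>: "0 \<le> xiR xi M (Suc k) - xiR xi M k" "xiR xi M (Suc k) - xiR xi M k \<le> 1"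
      using xiR_step[OF k] xiR_unit[of k] xiR_unit[of "Suc k"] k by auto
    have "d k \<le> 1 * H * L"
      unfolding d_def using \<Delta> h L_nonneg by (intro mult_right_mono mult_mono) auto
    moreover have "0 \<le> d k" unfolding d_def using \<Delta> h L_nonneg by simp
    moreover have "exp (d k) \<le> exp (L * H)" using \<open>d k \<le> 1 * H * L\<close> by (simp add: mult.commute)
    ultimately show "0 \<le> d k \<and> 1 + d k \<le> exp (L * H)"
      using exp_ge_add_one_self[of "d k"] by linarith
    have "\<bar>truncation_err h (xiR xi M k) (xiR xi M (Suc k))\<bar> \<le> C * h ^ (M + 1)"
      using trunc xiR_step[OF k] xiR_unit[of k] xiR_unit[of "Suc k"] k by simp
    then show "\<bar>err h eta0 P (Suc k)\<bar> \<le> (1 + d k) * \<bar>err h eta0 P k\<bar> + \<beta>"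
      using sdc_err_step[OF k h(1), of eta0 P] unfolding d_def \<beta>_def by linarith
  qed
  moreover have "exp (\<Sum>k<n. d k) * \<bar>err h eta0 P 0\<bar> \<le> exp (real N * h * L) * \<bar>eta0 - y 0\<bar>"
  proof -
    have "(\<Sum>k<n. d k) = xiR xi M n * h * L"
      unfolding d_def sum_distrib_right[symmetric] sum_lessThan_telescope by (simp add: xiR_def)
    moreover have "xiR xi M n \<le> real N"
      using xiR_unit[OF n] n by (cases "n = 0") (auto simp: xiR_def)
    ultimately have "(\<Sum>k<n. d k) \<le> real N * h * L" using h L_nonneg by (simp add: mult_right_mono)
    moreover have "err h eta0 P 0 = eta0 - y 0" by (simp add: err_def xiR_def)
    ultimately show ?thesis by (simp add: mult_right_mono)
  qed
  moreover have "real n * exp (L * H) ^ n * \<beta> \<le> real N * exp (L * H) ^ N * \<beta>"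
    using n L_nonneg H \<beta> by (intro mult_right_mono mult_mono power_increasing) auto
  ultimately show ?thesis unfolding \<beta>_def by linarith
qed

end

theorem corollary3:
  fixes f :: "real \<Rightarrow> real" and L H :: real and y :: "real \<Rightarrow> real"
    and xi :: "nat \<Rightarrow> real" and M :: nat
  assumes lip: "L-lipschitz_on UNIV f"
    and H: "H > 0"
    and ode: "\<And>t. t \<in> {0..H} \<Longrightarrow> (y has_real_derivative f (y t)) (at t within {0..H})"
    and smooth: "C_k_on M {0..H} (\<lambda>t. f (y t))"
    and M: "M \<ge> 1"
    and nodes_mono: "\<And>i j. 1 \<le> i \<Longrightarrow> i < j \<Longrightarrow> j \<le> M \<Longrightarrow> xi i < xi j"
    and nodes_lo: "0 \<le> xi 1" and nodes_hi: "xi M \<le> 1"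
  shows "\<exists>C1 C2 :: real. \<forall>h eta0 P n.
           0 < h \<and> h \<le> H \<and> 1 \<le> n \<and> n \<le> num_sub xi M \<longrightarrow>
           \<bar>sdc f xi M h eta0 P n - y (xiR xi M n * h)\<bar>
             \<le> exp (real (num_sub xi M) * h * L) * \<bar>eta0 - y 0\<bar>
               + C1 * h * (MAX m\<in>{1..M}. \<bar>P m - y (xi m * h)\<bar>)
               + C2 * h ^ (M + 1)"
proof -
  interpret sdc_problem f L H y xi M
    using assms by unfold_locales
  obtain C where C: "0 \<le> C"
    and trunc: "\<And>h a b. 0 < h \<Longrightarrow> h \<le> H \<Longrightarrow> 0 \<le> a \<Longrightarrow> a \<le> b \<Longrightarrow> b \<le> 1 \<Longrightarrow>
                  \<bar>truncation_err h a b\<bar> \<le> C * h ^ (M + 1)"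
    using truncation_err_bound by blast
  define G where "G = real N * exp (L * H) ^ N"
  show ?thesis
  proof (intro exI allI impI)
    fix h eta0 P n
    assume "0 < h \<and> h \<le> H \<and> 1 \<le> n \<and> n \<le> N"
    then have "\<bar>err h eta0 P n\<bar> \<le> exp (real N * h * L) * \<bar>eta0 - y 0\<bar>
        + G * (h * L * (1 + weight_sum) * node_err h P + C * h ^ (M + 1))"
      unfolding G_def using sdc_err_bound[OF _ _ _ trunc C] by auto
    then show "\<bar>sdc f xi M h eta0 P n - y (xiR xi M n * h)\<bar> \<le> exp (real N * h * L) * \<bar>eta0 - y 0\<bar>
        + (G * L * (1 + weight_sum)) * h * (MAX m\<in>{1..M}. \<bar>P m - y (xi m * h)\<bar>)
        + (G * C) * h ^ (M + 1)"
      by (simp add: err_def node_err_def algebra_simps)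
  qed
qed

end
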